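(* Let $P\subseteq\mathbb{R}^d$ be a simple $d$-polytope and $2\le k\le d$. Then $P$ is inscribed if and only if all its $k$-dimensional faces are inscribed.
   Context: A $d$-polytope is simple if every vertex lies in exactly $d$ facets. A polytope is inscribed if all its vertices lie on a common sphere. *)

theory Defs
  imports "HOL-Analysis.Analysis"
begin

definition simple_polytope :: "'a::euclidean_space set \<Rightarrow> bool" where
  "simple_polytope P \<longleftrightarrow> polytope P \<and>
     (\<forall>v. v extreme_point_of P \<longrightarrow>
        int (card {F. F facet_of P \<and> v \<in> F}) = aff_dim P)"

definition inscribed :: "'a::euclidean_space set \<Rightarrow> bool" where
  "inscribed P \<longleftrightarrow> (\<exists>c r. \<forall>v. v extreme_point_of P \<longrightarrow> dist c v = r)"

end

theory Submission
  imports Defs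
begin

text \<open>Write P as an irredundant intersection of finitely many halfspaces a_h . x <= b_h. As P is
  simple, every vertex v is tight for exactly d of them, and since v is extreme their normals form a
  basis. Hence v and its d neighbours along the edges of P form an affine frame, and there is a unique
  affine function L_v agreeing with |x|^2 at these d + 1 points. A k-face F through v is cut out by
  d - k of the hyperplanes tight at v. If F is inscribed, the affine function f with f(u) = |u|^2 at
  the vertices u of F agrees with L_v at v and at the neighbours of v in F, and the frame coordinates
  of points of F vanish in the remaining edge directions, so |u|^2 = L_v(u) at every vertex of F.
  For k >= 2, any neighbour w of v, and each neighbour of w, lies on a common k-face through v, so
  L_w = L_v. The edge graph of P is connected (climb along edges towards the unique maximiser of a
  suitable linear functional, as in the simplex method), so all L_v are one affine function L, and
  |v|^2 = L(v) at every vertex puts the vertices on a sphere.\<close>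

lemma inscribed_iff_norm_square_affine:
  fixes S :: "'a::euclidean_space set"
  shows "inscribed S \<longleftrightarrow> (\<exists>\<alpha> \<beta>. \<forall>v. v extreme_point_of S \<longrightarrow> v \<bullet> v = \<alpha> \<bullet> v + \<beta>)"
proof
  assume "inscribed S"
  then obtain c r where "\<And>v. v extreme_point_of S \<Longrightarrow> dist c v = r"
    unfolding inscribed_def by blast
  then have "v \<bullet> v = (2 *\<^sub>R c) \<bullet> v + (r\<^sup>2 - c \<bullet> c)" if "v extreme_point_of S" for v
    using that dot_square_norm[of "c - v"]
    by (fastforce simp: dist_norm inner_diff inner_commute)
  then show "\<exists>\<alpha> \<beta>. \<forall>v. v extreme_point_of S \<longrightarrow> v \<bullet> v = \<alpha> \<bullet> v + \<beta>"
    by blast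
next
  assume "\<exists>\<alpha> \<beta>. \<forall>v. v extreme_point_of S \<longrightarrow> v \<bullet> v = \<alpha> \<bullet> v + \<beta>"
  then obtain \<alpha> \<beta> where vertices: "\<And>v. v extreme_point_of S \<Longrightarrow> v \<bullet> v = \<alpha> \<bullet> v + \<beta>"
    by blast
  define c where "c = (1/2) *\<^sub>R \<alpha>"
  have "dist c v = sqrt (c \<bullet> c + \<beta>)" if "v extreme_point_of S" for v
  proof -
    have "(c - v) \<bullet> (c - v) = c \<bullet> c + \<beta>"
      using vertices[OF that] by (simp add: c_def inner_diff inner_commute)
    then show ?thesis
      by (simp add: dist_norm norm_eq_sqrt_inner)
  qed
  then show "inscribed S"
    unfolding inscribed_def by blast
qed

lemma inscribed_face:
  assumes "inscribed S" and "F face_of S"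
  shows "inscribed F"
  using assms extreme_point_of_face unfolding inscribed_def by blast

lemma eventually_feasible_direction:
  fixes a :: "'i \<Rightarrow> 'a::real_inner"
  assumes "finite H" and feasible: "\<And>h. h \<in> H \<Longrightarrow> a h \<bullet> v \<le> b h"
    and tight: "\<And>h. h \<in> H \<Longrightarrow> a h \<bullet> v = b h \<Longrightarrow> a h \<bullet> u \<le> 0"
  shows "\<forall>\<^sub>F t in at_right 0. \<forall>h\<in>H. a h \<bullet> (v + t *\<^sub>R u) \<le> b h"
proof (rule eventually_ball_finite[OF \<open>finite H\<close>], rule ballI)
  fix h assume h: "h \<in> H"
  show "\<forall>\<^sub>F t in at_right 0. a h \<bullet> (v + t *\<^sub>R u) \<le> b h"
  proof (cases "a h \<bullet> v = b h")
    case True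
    have "\<forall>\<^sub>F t in at_right 0. (0::real) < t"
      by (simp add: eventually_at_right_less)
    then show ?thesis
      by eventually_elim (use True tight[OF h True] in \<open>simp add: inner_add_right mult_nonneg_nonpos\<close>)
  next
    case False
    with feasible[OF h] have "a h \<bullet> v < b h" by simp
    moreover have "((\<lambda>t. a h \<bullet> (v + t *\<^sub>R u)) \<longlongrightarrow> a h \<bullet> v) (at_right 0)"
      by (auto intro!: tendsto_eq_intros)
    ultimately have "\<forall>\<^sub>F t in at_right 0. a h \<bullet> (v + t *\<^sub>R u) < b h"
      by (simp add: order_tendstoD(2))
    then show ?thesis
      by eventually_elim simp
  qed
qed

lemma biorthogonal_imp_independent:
  fixes w a :: "'i \<Rightarrow> 'a::real_inner"
  assumes "finite K"
    and orth: "\<And>g h. g \<in> K \<Longrightarrow> h \<in> K \<Longrightarrow> h \<noteq> g \<Longrightarrow> a g \<bullet> w h = 0"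
    and diag: "\<And>h. h \<in> K \<Longrightarrow> a h \<bullet> w h \<noteq> 0"
  shows "inj_on w K" and "independent (w ` K)"
proof -
  show inj: "inj_on w K"
    by (rule inj_onI) (metis orth diag)
  show "independent (w ` K)"
  proof (rule independent_if_scalars_zero)
    show "finite (w ` K)"
      using \<open>finite K\<close> by simp
  next
    fix f y assume sum: "(\<Sum>x\<in>w ` K. f x *\<^sub>R x) = 0" and "y \<in> w ` K"
    then obtain g where g: "g \<in> K" "y = w g" by blast
    have "0 = a g \<bullet> (\<Sum>x\<in>w ` K. f x *\<^sub>R x)"
      using sum by simp
    also have "\<dots> = (\<Sum>h\<in>K. f (w h) * (a g \<bullet> w h))"
      by (simp add: inner_sum_right sum.reindex[OF inj])
    also have "\<dots> = f (w g) * (a g \<bullet> w g)"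
      using \<open>finite K\<close> g(1) by (subst sum.remove) (auto intro!: sum.neutral, metis orth)
    finally show "f y = 0"
      using diag[OF g(1)] g(2) by simp
  qed
qed

lemma polyhedron_explicit_interior_point:
  fixes S :: "'a::euclidean_space set"
  assumes "finite F"
      and seq: "S = affine hull S \<inter> \<Inter>F"
      and faceq: "\<And>h. h \<in> F \<Longrightarrow> a h \<noteq> 0 \<and> h = {x. a h \<bullet> x \<le> b h}"
      and psub: "\<And>F'. F' \<subset> F \<Longrightarrow> S \<subset> affine hull S \<inter> \<Inter>F'"
      and "F \<noteq> {}"
    obtains p where "p \<in> S" "\<And>g. g \<in> F \<Longrightarrow> a g \<bullet> p < b g"
proof -
  have "S \<noteq> {}"
    using psub[of "{}"] \<open>F \<noteq> {}\<close> by fastforce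
  moreover have "polyhedron S"
  proof -
    have "polyhedron g" if "g \<in> F" for g
    proof -
      have "g = {x. a g \<bullet> x \<le> b g}"
        using faceq[OF that] by blast
      then show ?thesis
        by (metis polyhedron_halfspace_le)
    qed
    then have "polyhedron (affine hull S \<inter> \<Inter>F)"
      using \<open>finite F\<close> by (simp add: polyhedron_affine_hull)
    then show ?thesis
      using seq by simp
  qed
  then have "convex S"
    by (rule polyhedron_imp_convex)
  ultimately obtain p where "p \<in> rel_interior S"
    using rel_interior_eq_empty by blast
  then show ?thesis
    using that rel_interior_polyhedron_explicit[OF assms(1-4)] by auto
qed

lemma facet_of_polyhedron_explicit_point:
  fixes S :: "'a::euclidean_space set"
  assumes "finite F"
      and seq: "S = affine hull S \<inter> \<Inter>F"
      and faceq: "\<And>h. h \<in> F \<Longrightarrow> a h \<noteq> 0 \<and> h = {x. a h \<bullet> x \<le> b h}"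
      and psub: "\<And>F'. F' \<subset> F \<Longrightarrow> S \<subset> affine hull S \<inter> \<Inter>F'"
      and h: "h \<in> F"
    obtains y where "y \<in> S" "a h \<bullet> y = b h" "\<And>g. g \<in> F - {h} \<Longrightarrow> a g \<bullet> y < b g"
proof -
  have mem_S: "x \<in> S \<longleftrightarrow> x \<in> affine hull S \<and> (\<forall>g\<in>F. a g \<bullet> x \<le> b g)" for x
    using seq faceq by blast
  obtain z where z: "z \<in> affine hull S" "\<And>g. g \<in> F - {h} \<Longrightarrow> a g \<bullet> z \<le> b g" "z \<notin> S"
    using psub[of "F - {h}"] h faceq by blast
  then have z_h: "b h < a h \<bullet> z"
    using h mem_S by force
  obtain p where p: "p \<in> S" "\<And>g. g \<in> F \<Longrightarrow> a g \<bullet> p < b g"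
    using polyhedron_explicit_interior_point[OF \<open>finite F\<close> seq faceq psub] h by blast
  have num: "0 < b h - a h \<bullet> p" and den: "b h - a h \<bullet> p < a h \<bullet> z - a h \<bullet> p"
    using z_h p(2)[OF h] by auto
  define t where "t = (b h - a h \<bullet> p) / (a h \<bullet> z - a h \<bullet> p)"
  have t: "0 < t" "t < 1"
    using num den by (simp_all add: t_def)
  define y where "y = (1 - t) *\<^sub>R p + t *\<^sub>R z"
  have y_inner: "a g \<bullet> y = a g \<bullet> p + t * (a g \<bullet> z - a g \<bullet> p)" for g
    by (simp add: y_def algebra_simps)
  have y_h: "a h \<bullet> y = b h"
    using num den unfolding y_inner t_def by simp
  have y_strict: "a g \<bullet> y < b g" if "g \<in> F - {h}" for g
  proof -
    have "(1 - t) * (a g \<bullet> p) < (1 - t) * b g"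
      using p(2) that t by simp
    moreover have "t * (a g \<bullet> z) \<le> t * b g"
      using z(2)[OF that] t by (simp add: mult_left_mono)
    ultimately show ?thesis
      unfolding y_inner by (simp add: algebra_simps)
  qed
  have "y \<in> affine hull S"
    unfolding y_def by (rule mem_affine) (simp_all add: hull_inc p(1) z(1))
  moreover have "a g \<bullet> y \<le> b g" if "g \<in> F" for g
    using that y_h y_strict[of g] by (cases "g = h") simp_all
  ultimately have "y \<in> S"
    using mem_S by blast
  then show ?thesis
    using that y_h y_strict by blast
qed

lemma inj_on_facet_of_polyhedron_explicit:
  fixes S :: "'a::euclidean_space set"
  assumes "finite F"
      and seq: "S = affine hull S \<inter> \<Inter>F"
      and faceq: "\<And>h. h \<in> F \<Longrightarrow> a h \<noteq> 0 \<and> h = {x. a h \<bullet> x \<le> b h}"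
      and psub: "\<And>F'. F' \<subset> F \<Longrightarrow> S \<subset> affine hull S \<inter> \<Inter>F'"
    shows "inj_on (\<lambda>h. S \<inter> {x. a h \<bullet> x = b h}) F"
proof (rule inj_onI, rule ccontr)
  fix h h' assume h: "h \<in> F" and h': "h' \<in> F" and "h \<noteq> h'"
    and same_facet: "S \<inter> {x. a h \<bullet> x = b h} = S \<inter> {x. a h' \<bullet> x = b h'}"
  obtain y where "y \<in> S" "a h' \<bullet> y = b h'" and strict: "\<And>g. g \<in> F - {h'} \<Longrightarrow> a g \<bullet> y < b g"
    using facet_of_polyhedron_explicit_point[OF assms h'] by blast
  then have "a h \<bullet> y = b h"
    using same_facet by blast
  then show False
    using strict[of h] h \<open>h \<noteq> h'\<close> by simp
qed

lemma compact_convex_extreme_point_neq: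
  fixes S :: "'a::euclidean_space set"
  assumes "compact S" "convex S" "y \<in> S" "y \<noteq> v"
  obtains w where "w extreme_point_of S" "w \<noteq> v"
proof -
  have "\<not> {w. w extreme_point_of S} \<subseteq> {v}"
  proof
    assume "{w. w extreme_point_of S} \<subseteq> {v}"
    then have "S \<subseteq> {v}"
      using Krein_Milman_Minkowski[OF assms(1,2)] hull_mono[of _ "{v}" convex]
      by (metis convex_hull_singleton)
    then show False
      using assms(3,4) by blast
  qed
  then show ?thesis
    using that by blast
qed

locale simple_presentation =
  fixes P :: "'a::euclidean_space set" and H :: "'i set"
    and a :: "'i \<Rightarrow> 'a" and b :: "'i \<Rightarrow> real"
  assumes finite_H: "finite H"
    and P_eq: "P = {x. \<forall>h\<in>H. a h \<bullet> x \<le> b h}"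
    and polytope_P: "polytope P"
    and card_tight_vertex: "\<And>v. v extreme_point_of P \<Longrightarrow> card {h\<in>H. a h \<bullet> v = b h} = DIM('a)"
begin

definition tight :: "'a \<Rightarrow> 'i set" where
  "tight x = {h\<in>H. a h \<bullet> x = b h}"

definition tight_face :: "'i set \<Rightarrow> 'a set" where
  "tight_face J = {x\<in>P. \<forall>h\<in>J. a h \<bullet> x = b h}"

lemma mem_P: "x \<in> P \<longleftrightarrow> (\<forall>h\<in>H. a h \<bullet> x \<le> b h)"
  using P_eq by blast

lemma vertex_in_P: "v extreme_point_of P \<Longrightarrow> v \<in> P"
  by (simp add: extreme_point_of_def)

lemma finite_tight: "finite (tight x)"
  using finite_H by (simp add: tight_def)

lemma tight_subset: "tight x \<subseteq> H"
  by (auto simp: tight_def)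

lemma card_tight: "v extreme_point_of P \<Longrightarrow> card (tight v) = DIM('a)"
  using card_tight_vertex by (simp add: tight_def)

lemma tight_face_antimono: "J \<subseteq> J' \<Longrightarrow> tight_face J' \<subseteq> tight_face J"
  by (auto simp: tight_face_def)

lemma vertex_in_tight_face: "v extreme_point_of P \<Longrightarrow> J \<subseteq> tight v \<Longrightarrow> v \<in> tight_face J"
  by (auto simp: tight_face_def tight_def vertex_in_P)

lemma tight_face_supporting_hyperplane:
  assumes "J \<subseteq> H"
  shows "P \<subseteq> {x. (\<Sum>h\<in>J. a h) \<bullet> x \<le> (\<Sum>h\<in>J. b h)}"
    and "tight_face J = P \<inter> {x. (\<Sum>h\<in>J. a h) \<bullet> x = (\<Sum>h\<in>J. b h)}"
proof -
  have "finite J"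
    using assms finite_H finite_subset by blast
  have slack: "(\<Sum>h\<in>J. b h) - (\<Sum>h\<in>J. a h) \<bullet> x = (\<Sum>h\<in>J. b h - a h \<bullet> x)" for x
    by (simp add: inner_sum_left sum_subtractf)
  have nonneg: "0 \<le> b h - a h \<bullet> x" if "x \<in> P" "h \<in> J" for x h
    using that assms mem_P by auto
  show "P \<subseteq> {x. (\<Sum>h\<in>J. a h) \<bullet> x \<le> (\<Sum>h\<in>J. b h)}"
  proof
    fix x assume "x \<in> P"
    then have "0 \<le> (\<Sum>h\<in>J. b h - a h \<bullet> x)"
      by (intro sum_nonneg nonneg)
    then show "x \<in> {x. (\<Sum>h\<in>J. a h) \<bullet> x \<le> (\<Sum>h\<in>J. b h)}"
      using slack[of x] by simp
  qed
  have "x \<in> tight_face J \<longleftrightarrow> x \<in> P \<and> (\<Sum>h\<in>J. b h - a h \<bullet> x) = 0" for x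
  proof (cases "x \<in> P")
    case True
    then show ?thesis
      using sum_nonneg_eq_0_iff[OF \<open>finite J\<close> nonneg[OF True]] by (auto simp: tight_face_def)
  qed (simp add: tight_face_def)
  moreover have "(\<Sum>h\<in>J. a h) \<bullet> x = (\<Sum>h\<in>J. b h) \<longleftrightarrow> (\<Sum>h\<in>J. b h - a h \<bullet> x) = 0" for x
    using slack[of x] by linarith
  ultimately show "tight_face J = P \<inter> {x. (\<Sum>h\<in>J. a h) \<bullet> x = (\<Sum>h\<in>J. b h)}"
    by blast
qed

lemma tight_face_face_of:
  assumes "J \<subseteq> H"
  shows "tight_face J face_of P"
  unfolding tight_face_supporting_hyperplane(2)[OF assms]
  using polytope_imp_convex[OF polytope_P] tight_face_supporting_hyperplane(1)[OF assms]
  by (intro face_of_Int_supporting_hyperplane_le) auto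

lemma eventually_mem_P_direction:
  assumes "x \<in> P" and "\<And>h. h \<in> tight x \<Longrightarrow> a h \<bullet> u \<le> 0"
  shows "\<forall>\<^sub>F t in at_right 0. x + t *\<^sub>R u \<in> P"
proof -
  have "\<forall>\<^sub>F t in at_right 0. \<forall>h\<in>H. a h \<bullet> (x + t *\<^sub>R u) \<le> b h"
    using assms by (intro eventually_feasible_direction[OF finite_H]) (auto simp: mem_P tight_def)
  then show ?thesis
    by (simp add: mem_P)
qed

lemma orthogonal_tight_normals_eq_0:
  assumes v: "v extreme_point_of P" and orth: "\<And>h. h \<in> tight v \<Longrightarrow> a h \<bullet> u = 0"
  shows "u = 0"
proof (rule ccontr)
  assume "u \<noteq> 0"
  have "\<forall>\<^sub>F t in at_right 0. v + t *\<^sub>R u \<in> P"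
    by (rule eventually_mem_P_direction[OF vertex_in_P[OF v]]) (simp add: orth)
  moreover have "\<forall>\<^sub>F t in at_right 0. v + t *\<^sub>R (- u) \<in> P"
    by (rule eventually_mem_P_direction[OF vertex_in_P[OF v]]) (simp add: orth)
  moreover have "\<forall>\<^sub>F t in at_right 0. (0::real) < t"
    by (simp add: eventually_at_right_less)
  ultimately have "\<forall>\<^sub>F t in at_right 0. 0 < t \<and> v + t *\<^sub>R u \<in> P \<and> v - t *\<^sub>R u \<in> P"
    by eventually_elim simp
  then obtain t where t: "0 < t" "v + t *\<^sub>R u \<in> P" "v - t *\<^sub>R u \<in> P"
    using eventually_happens'[OF trivial_limit_at_right_real] by blast
  have "v - t *\<^sub>R u \<noteq> v + t *\<^sub>R u"
    using t(1) \<open>u \<noteq> 0\<close> by (simp add: algebra_simps flip: scaleR_add_left)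
  moreover have "(v - t *\<^sub>R u) + (v + t *\<^sub>R u) = 2 *\<^sub>R v"
    by (simp add: scaleR_2)
  then have "midpoint (v - t *\<^sub>R u) (v + t *\<^sub>R u) = v"
    by (simp add: midpoint_def)
  ultimately have "v \<in> open_segment (v - t *\<^sub>R u) (v + t *\<^sub>R u)"
    using midpoint_in_open_segment by metis
  then show False
    using v t unfolding extreme_point_of_def by blast
qed

lemma tight_face_tight_vertex:
  assumes v: "v extreme_point_of P"
  shows "tight_face (tight v) = {v}"
proof -
  have "x = v" if "x \<in> tight_face (tight v)" for x
  proof -
    have "a h \<bullet> (x - v) = 0" if "h \<in> tight v" for h
      using \<open>x \<in> tight_face (tight v)\<close> that by (simp add: tight_face_def tight_def inner_diff_right)
    then show ?thesis
      using orthogonal_tight_normals_eq_0[OF v] by fastforce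
  qed
  then show ?thesis
    using vertex_in_tight_face[OF v] by blast
qed

lemma edge_direction_exists:
  assumes v: "v extreme_point_of P" and h: "h \<in> tight v"
  obtains d where "a h \<bullet> d < 0" and "\<And>g. g \<in> tight v - {h} \<Longrightarrow> a g \<bullet> d = 0"
proof -
  have "dim (a ` (tight v - {h})) \<le> card (a ` (tight v - {h}))"
    using finite_tight by (intro dim_le_card span_superset) auto
  also have "\<dots> \<le> card (tight v - {h})"
    using finite_tight by (intro card_image_le) auto
  also have "\<dots> < DIM('a)"
    using card_tight[OF v] h finite_tight by (simp add: card_Diff1_less)
  finally obtain u where "u \<noteq> 0" and u: "\<And>y. y \<in> span (a ` (tight v - {h})) \<Longrightarrow> orthogonal u y"
    using orthogonal_to_subspace_exists by blast
  have orth: "a g \<bullet> u = 0" if "g \<in> tight v - {h}" for g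
    using u[OF span_base[OF imageI[OF that]]] by (simp add: orthogonal_def inner_commute)
  then have "a h \<bullet> u \<noteq> 0"
    using orthogonal_tight_normals_eq_0[OF v] \<open>u \<noteq> 0\<close> by blast
  show ?thesis
  proof (cases "a h \<bullet> u < 0")
    case True
    then show ?thesis
      using that orth by blast
  next
    case False
    then show ?thesis
      using that[of "- u"] orth \<open>a h \<bullet> u \<noteq> 0\<close> by simp
  qed
qed

lemma neighbour_exists:
  assumes v: "v extreme_point_of P" and h: "h \<in> tight v"
  shows "\<exists>w. w extreme_point_of P \<and> w \<noteq> v \<and> w \<in> tight_face (tight v - {h})"
proof -
  let ?E = "tight_face (tight v - {h})"
  obtain d where d_h: "a h \<bullet> d < 0" and d_orth: "\<And>g. g \<in> tight v - {h} \<Longrightarrow> a g \<bullet> d = 0"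
    using edge_direction_exists[OF v h] by blast
  have "\<forall>\<^sub>F t in at_right 0. v + t *\<^sub>R d \<in> P"
    using d_h d_orth
    by (intro eventually_mem_P_direction[OF vertex_in_P[OF v]]) (metis Diff_iff less_eq_real_def order_refl singletonD)
  moreover have "\<forall>\<^sub>F t in at_right 0. (0::real) < t"
    by (simp add: eventually_at_right_less)
  ultimately obtain t where t: "0 < t" "v + t *\<^sub>R d \<in> P"
    using eventually_happens'[OF trivial_limit_at_right_real, OF eventually_conj] by blast
  have "d \<noteq> 0"
    using d_h by auto
  then have "v + t *\<^sub>R d \<noteq> v"
    using t(1) by simp
  moreover have "v + t *\<^sub>R d \<in> ?E"
    using t(2) v d_orth by (auto simp: tight_face_def tight_def inner_add_right)
  moreover have "polytope ?E"
    using face_of_polytope_polytope[OF polytope_P tight_face_face_of] tight_subset by blast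
  ultimately obtain w where "w extreme_point_of ?E" "w \<noteq> v"
    using compact_convex_extreme_point_neq polytope_imp_compact polytope_imp_convex by metis
  then show ?thesis
    using extreme_point_of_face[OF tight_face_face_of] tight_subset by blast
qed

(* tight_face (tight v - {h}) is the edge of P at v that leaves the facet h; this picks its other
   endpoint. *)
definition neighbour :: "'a \<Rightarrow> 'i \<Rightarrow> 'a" where
  "neighbour v h = (SOME w. w extreme_point_of P \<and> w \<noteq> v \<and> w \<in> tight_face (tight v - {h}))"

lemma
  assumes "v extreme_point_of P" and "h \<in> tight v"
  shows neighbour_vertex: "neighbour v h extreme_point_of P"
    and neighbour_neq: "neighbour v h \<noteq> v"
    and neighbour_in_edge: "neighbour v h \<in> tight_face (tight v - {h})"
  using someI_ex[OF neighbour_exists[OF assms]] unfolding neighbour_def by auto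

lemma neighbour_in_tight_face:
  "v extreme_point_of P \<Longrightarrow> h \<in> tight v \<Longrightarrow> J \<subseteq> tight v - {h} \<Longrightarrow> neighbour v h \<in> tight_face J"
  using neighbour_in_edge tight_face_antimono by blast

lemma inner_neighbour_diff:
  assumes v: "v extreme_point_of P" and "g \<in> tight v" "h \<in> tight v" "h \<noteq> g"
  shows "a g \<bullet> (neighbour v h - v) = 0"
  using neighbour_in_edge[OF v \<open>h \<in> tight v\<close>] assms(2,4)
  by (auto simp: tight_face_def tight_def inner_diff_right)

lemma neighbour_slack_pos:
  assumes v: "v extreme_point_of P" and h: "h \<in> tight v"
  shows "a h \<bullet> neighbour v h < b h"
proof -
  have "a h \<bullet> neighbour v h \<le> b h"
    using neighbour_in_edge[OF v h] h tight_subset by (auto simp: tight_face_def mem_P)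
  moreover have "a h \<bullet> neighbour v h \<noteq> b h"
  proof
    assume "a h \<bullet> neighbour v h = b h"
    then have "a g \<bullet> (neighbour v h - v) = 0" if "g \<in> tight v" for g
      using inner_neighbour_diff[OF v that h] that h by (cases "g = h") (auto simp: tight_def inner_diff_right)
    then show False
      using orthogonal_tight_normals_eq_0[OF v] neighbour_neq[OF v h] by force
  qed
  ultimately show ?thesis
    by simp
qed

definition edge_coord :: "'a \<Rightarrow> 'i \<Rightarrow> 'a \<Rightarrow> real" where
  "edge_coord v h x = (b h - a h \<bullet> x) / (b h - a h \<bullet> neighbour v h)"

lemma edge_coord_eq_0: "a h \<bullet> x = b h \<Longrightarrow> edge_coord v h x = 0"
  by (simp add: edge_coord_def)

lemma edge_coord_nonneg:
  assumes "v extreme_point_of P" "h \<in> tight v" "x \<in> P"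
  shows "0 \<le> edge_coord v h x"
  using assms neighbour_slack_pos[OF assms(1,2)] tight_subset mem_P
  by (force simp: edge_coord_def)

lemma vertex_edge_expansion:
  assumes v: "v extreme_point_of P"
  shows "x - v = (\<Sum>h\<in>tight v. edge_coord v h x *\<^sub>R (neighbour v h - v))"
proof -
  let ?y = "x - v - (\<Sum>h\<in>tight v. edge_coord v h x *\<^sub>R (neighbour v h - v))"
  have "a g \<bullet> ?y = 0" if g: "g \<in> tight v" for g
  proof -
    have "a g \<bullet> (\<Sum>h\<in>tight v. edge_coord v h x *\<^sub>R (neighbour v h - v))
        = (\<Sum>h\<in>tight v. edge_coord v h x * (a g \<bullet> (neighbour v h - v)))"
      by (simp add: inner_sum_right)
    also have "\<dots> = edge_coord v g x * (a g \<bullet> (neighbour v g - v))"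
      using finite_tight g
      by (subst sum.remove) (auto intro!: sum.neutral simp: inner_neighbour_diff[OF v g])
    also have "\<dots> = a g \<bullet> x - b g"
    proof -
      have "b g - a g \<bullet> neighbour v g \<noteq> 0"
        using neighbour_slack_pos[OF v g] by simp
      then show ?thesis
        using g by (simp add: edge_coord_def tight_def inner_diff_right field_simps)
    qed
    finally show ?thesis
      using g by (simp add: tight_def inner_diff_right)
  qed
  then show ?thesis
    using orthogonal_tight_normals_eq_0[OF v] by force
qed

lemma improving_neighbour:
  assumes v: "v extreme_point_of P" and "x \<in> P" and "c \<bullet> v < c \<bullet> x"
  shows "\<exists>h\<in>tight v. c \<bullet> v < c \<bullet> neighbour v h"
proof (rule ccontr)
  assume "\<not> ?thesis"
  then have "c \<bullet> (x - v) \<le> 0"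
    using edge_coord_nonneg[OF v _ \<open>x \<in> P\<close>]
    by (subst vertex_edge_expansion[OF v])
      (auto simp: inner_sum_right inner_diff_right intro!: sum_nonpos mult_nonneg_nonpos)
  then show False
    using \<open>c \<bullet> v < c \<bullet> x\<close> by (simp add: inner_diff_right)
qed

lemma independent_edge_vectors:
  assumes v: "v extreme_point_of P" and "K \<subseteq> tight v"
  shows "inj_on (\<lambda>h. neighbour v h - v) K" and "independent ((\<lambda>h. neighbour v h - v) ` K)"
proof -
  have "a g \<bullet> (neighbour v h - v) = 0" if "g \<in> K" "h \<in> K" "h \<noteq> g" for g h
    using inner_neighbour_diff[OF v] that \<open>K \<subseteq> tight v\<close> by blast
  moreover have "a h \<bullet> (neighbour v h - v) \<noteq> 0" if "h \<in> K" for h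
  proof -
    have "h \<in> tight v"
      using that \<open>K \<subseteq> tight v\<close> by blast
    then show ?thesis
      using neighbour_slack_pos[OF v \<open>h \<in> tight v\<close>] by (simp add: tight_def inner_diff_right)
  qed
  moreover have "finite K"
    using \<open>K \<subseteq> tight v\<close> finite_tight finite_subset by blast
  ultimately show "inj_on (\<lambda>h. neighbour v h - v) K" "independent ((\<lambda>h. neighbour v h - v) ` K)"
    using biorthogonal_imp_independent[of K a "\<lambda>h. neighbour v h - v"] by auto
qed

lemma tight_face_diff_in_span:
  assumes v: "v extreme_point_of P" and "x \<in> tight_face J"
  shows "x - v \<in> span ((\<lambda>h. neighbour v h - v) ` (tight v - J))"
proof -
  have "x - v = (\<Sum>h\<in>tight v - J. edge_coord v h x *\<^sub>R (neighbour v h - v))"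
    unfolding vertex_edge_expansion[OF v, of x] using assms(2) finite_tight
    by (intro sum.mono_neutral_right) (auto simp: tight_face_def edge_coord_eq_0)
  moreover have "neighbour v h - v \<in> span ((\<lambda>h. neighbour v h - v) ` (tight v - J))"
    if "h \<in> tight v - J" for h
    using that by (simp add: span_base)
  ultimately show ?thesis
    by (metis (no_types, lifting) span_sum span_scale)
qed

lemma aff_dim_tight_face:
  assumes v: "v extreme_point_of P" and J: "J \<subseteq> tight v"
  shows "aff_dim (tight_face J) = DIM('a) - card J"
proof -
  let ?K = "tight v - J"
  let ?w = "\<lambda>h. neighbour v h - v"
  have "dim (?w ` ?K) = DIM('a) - card J"
    using independent_edge_vectors[OF v, of ?K] card_tight[OF v] J finite_tight
    by (simp add: dim_eq_card_independent card_image card_Diff_subset finite_subset)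
  moreover have "dim ((\<lambda>x. x - v) ` tight_face J) = dim (?w ` ?K)"
  proof (rule antisym)
    have "(\<lambda>x. x - v) ` tight_face J \<subseteq> span (?w ` ?K)"
      using tight_face_diff_in_span[OF v] by blast
    then show "dim ((\<lambda>x. x - v) ` tight_face J) \<le> dim (?w ` ?K)"
      by (rule dim_mono)
    have "neighbour v h \<in> tight_face J" if "h \<in> ?K" for h
      using neighbour_in_tight_face[OF v, of h J] that J by blast
    then show "dim (?w ` ?K) \<le> dim ((\<lambda>x. x - v) ` tight_face J)"
      by (intro dim_subset) auto
  qed
  moreover have "v \<in> affine hull tight_face J"
    using vertex_in_tight_face[OF v J] by (simp add: hull_inc)
  ultimately show ?thesis
    by (simp add: aff_dim_eq_dim_subtract)
qed

(* The affine function agreeing with \<phi> at v and at all neighbours of v; L_v for \<phi> = |.|^2. *)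
definition interp :: "'a \<Rightarrow> ('a \<Rightarrow> real) \<Rightarrow> 'a \<Rightarrow> real" where
  "interp v \<phi> x = \<phi> v + (\<Sum>h\<in>tight v. edge_coord v h x * (\<phi> (neighbour v h) - \<phi> v))"

lemma interp_at_vertex: "interp v \<phi> v = \<phi> v"
  by (simp add: interp_def edge_coord_eq_0 tight_def)

lemma interp_affine:
  assumes "v extreme_point_of P"
  shows "interp v (\<lambda>y. \<alpha> \<bullet> y + \<beta>) x = \<alpha> \<bullet> x + \<beta>"
proof -
  have "\<alpha> \<bullet> (x - v) = (\<Sum>h\<in>tight v. edge_coord v h x * (\<alpha> \<bullet> (neighbour v h - v)))"
    by (subst vertex_edge_expansion[OF assms]) (simp add: inner_sum_right)
  then show ?thesis
    by (simp add: interp_def inner_diff_right)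
qed

lemma interp_is_affine: "\<exists>\<alpha> \<beta>. \<forall>x. interp v \<phi> x = \<alpha> \<bullet> x + \<beta>"
proof -
  define c where "c h = (\<phi> (neighbour v h) - \<phi> v) / (b h - a h \<bullet> neighbour v h)" for h
  have "interp v \<phi> x = (- (\<Sum>h\<in>tight v. c h *\<^sub>R a h)) \<bullet> x + (\<phi> v + (\<Sum>h\<in>tight v. c h * b h))" for x
  proof -
    have "interp v \<phi> x = \<phi> v + (\<Sum>h\<in>tight v. c h * b h - c h * (a h \<bullet> x))"
      unfolding interp_def edge_coord_def c_def
      by (simp add: divide_inverse algebra_simps)
    then show ?thesis
      by (simp add: sum_subtractf inner_sum_left)
  qed
  then show ?thesis
    by blast
qed

lemma interp_cong:
  assumes "\<phi> v = \<psi> v"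
    and "\<And>h. h \<in> tight v \<Longrightarrow> a h \<bullet> x \<noteq> b h \<Longrightarrow> \<phi> (neighbour v h) = \<psi> (neighbour v h)"
  shows "interp v \<phi> x = interp v \<psi> x"
proof -
  have terms: "edge_coord v h x * (\<phi> (neighbour v h) - \<phi> v) = edge_coord v h x * (\<psi> (neighbour v h) - \<psi> v)"
    if "h \<in> tight v" for h
    using assms that by (cases "a h \<bullet> x = b h") (simp_all add: edge_coord_eq_0)
  then show ?thesis
    unfolding interp_def using sum.cong[OF refl terms] assms(1) by simp
qed

lemma norm_square_interp_on_inscribed_face:
  assumes v: "v extreme_point_of P" and J: "J \<subseteq> tight v" and "inscribed (tight_face J)"
    and u: "u extreme_point_of P" "u \<in> tight_face J"
  shows "u \<bullet> u = interp v (\<lambda>y. y \<bullet> y) u"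
proof -
  obtain \<alpha> \<beta> where sphere: "\<And>w. w extreme_point_of tight_face J \<Longrightarrow> w \<bullet> w = \<alpha> \<bullet> w + \<beta>"
    using \<open>inscribed (tight_face J)\<close> unfolding inscribed_iff_norm_square_affine by blast
  have face: "tight_face J face_of P"
    using J tight_subset by (intro tight_face_face_of) blast
  have on_face: "w \<bullet> w = \<alpha> \<bullet> w + \<beta>" if "w extreme_point_of P" "w \<in> tight_face J" for w
    using sphere extreme_point_of_face[OF face] that by blast
  have "u \<bullet> u = interp v (\<lambda>y. \<alpha> \<bullet> y + \<beta>) u"
    using on_face[OF u] interp_affine[OF v] by simp
  also have "\<dots> = interp v (\<lambda>y. y \<bullet> y) u"
  proof (rule interp_cong)
    show "\<alpha> \<bullet> v + \<beta> = v \<bullet> v"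
      using on_face[OF v vertex_in_tight_face[OF v J]] by simp
    fix h assume h: "h \<in> tight v" and "a h \<bullet> u \<noteq> b h"
    then have "J \<subseteq> tight v - {h}"
      using J u(2) by (auto simp: tight_face_def)
    then show "\<alpha> \<bullet> neighbour v h + \<beta> = neighbour v h \<bullet> neighbour v h"
      using on_face neighbour_vertex[OF v h] neighbour_in_tight_face[OF v h] by simp
  qed
  finally show ?thesis .
qed

lemma codim_tight_subset_exists:
  assumes v: "v extreme_point_of P" and "2 \<le> k"
  shows "\<exists>J. J \<subseteq> tight v - {h, g} \<and> card J = DIM('a) - k"
proof -
  have "card (tight v) - card {h, g} \<le> card (tight v - {h, g})"
    by (rule diff_card_le_card_Diff) simp
  moreover have "card {h, g} \<le> 2"
    by (cases "h = g") simp_all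
  ultimately have "DIM('a) - k \<le> card (tight v - {h, g})"
    using card_tight[OF v] \<open>2 \<le> k\<close> by arith
  then show ?thesis
    by (meson obtain_subset_with_card_n)
qed

lemma interp_neighbour:
  assumes v: "v extreme_point_of P" and h: "h \<in> tight v" and "2 \<le> k"
    and faces: "\<And>J. J \<subseteq> tight v \<Longrightarrow> card J = DIM('a) - k \<Longrightarrow> inscribed (tight_face J)"
  shows "interp (neighbour v h) (\<lambda>y. y \<bullet> y) = interp v (\<lambda>y. y \<bullet> y)"
proof
  fix x
  let ?w = "neighbour v h" and ?q = "\<lambda>y. y \<bullet> y"
  have w: "?w extreme_point_of P"
    using neighbour_vertex[OF v h] .
  have tight_w: "tight v - {h} \<subseteq> tight ?w"
    using neighbour_in_edge[OF v h] by (auto simp: tight_face_def tight_def)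
  have on_star: "u \<bullet> u = interp v ?q u"
    if "u extreme_point_of P" "J \<subseteq> tight v - {h, g}" "card J = DIM('a) - k" "u \<in> tight_face J" for u J g
    using norm_square_interp_on_inscribed_face[OF v _ faces] that by blast
  obtain \<alpha> \<beta> where affine: "\<And>y. interp v ?q y = \<alpha> \<bullet> y + \<beta>"
    using interp_is_affine by blast
  have "interp ?w ?q x = interp ?w (\<lambda>y. \<alpha> \<bullet> y + \<beta>) x"
  proof (rule interp_cong)
    obtain J where J: "J \<subseteq> tight v - {h, h}" "card J = DIM('a) - k"
      using codim_tight_subset_exists[OF v \<open>2 \<le> k\<close>] by blast
    then have "?w \<in> tight_face J"
      using neighbour_in_tight_face[OF v h] by blast
    then show "?w \<bullet> ?w = \<alpha> \<bullet> ?w + \<beta>"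
      using on_star[OF w J] affine by simp
  next
    fix g assume g: "g \<in> tight ?w"
    obtain J where J: "J \<subseteq> tight v - {h, g}" "card J = DIM('a) - k"
      using codim_tight_subset_exists[OF v \<open>2 \<le> k\<close>] by blast
    then have "neighbour ?w g \<in> tight_face J"
      using neighbour_in_tight_face[OF w g] tight_w by blast
    then show "neighbour ?w g \<bullet> neighbour ?w g = \<alpha> \<bullet> neighbour ?w g + \<beta>"
      using on_star[OF neighbour_vertex[OF w g] J] affine by simp
  qed
  also have "\<dots> = interp v ?q x"
    using interp_affine[OF w] affine by simp
  finally show "interp ?w ?q x = interp v ?q x" .
qed

lemma vertex_induct:
  assumes v0: "v0 extreme_point_of P" and "Q v0"
    and step: "\<And>v h. v extreme_point_of P \<Longrightarrow> h \<in> tight v \<Longrightarrow> Q (neighbour v h) \<Longrightarrow> Q v"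
    and v: "v extreme_point_of P"
  shows "Q v"
proof (rule ccontr)
  define c where "c = (\<Sum>h\<in>tight v0. a h)"
  define d where "d = (\<Sum>h\<in>tight v0. b h)"
  have le: "P \<subseteq> {x. c \<bullet> x \<le> d}" and eq: "{v0} = P \<inter> {x. c \<bullet> x = d}"
    using tight_face_supporting_hyperplane[OF tight_subset, of v0] tight_face_tight_vertex[OF v0]
    by (simp_all add: c_def d_def)
  have c_max: "c \<bullet> x < c \<bullet> v0" if "x \<in> P" "x \<noteq> v0" for x
  proof -
    have "c \<bullet> v0 = d" and "c \<bullet> x \<noteq> d"
      using eq that by blast+
    then show ?thesis
      using le that(1) by fastforce
  qed
  let ?B = "{u. u extreme_point_of P \<and> \<not> Q u}"
  assume "\<not> Q v"
  moreover have "finite ?B"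
    using finite_polyhedron_extreme_points[OF polytope_imp_polyhedron[OF polytope_P]] by simp
  ultimately obtain u where u: "u \<in> ?B" and u_max: "\<And>u'. u' \<in> ?B \<Longrightarrow> c \<bullet> u' \<le> c \<bullet> u"
    using v ex_is_arg_min_if_finite[of ?B "\<lambda>u. - (c \<bullet> u)"] unfolding is_arg_min_linorder by force
  then have "u \<noteq> v0"
    using \<open>Q v0\<close> by blast
  then obtain h where h: "h \<in> tight u" and "c \<bullet> u < c \<bullet> neighbour u h"
    using improving_neighbour[OF _ vertex_in_P[OF v0]] c_max vertex_in_P u by blast
  then have "Q (neighbour u h)"
    using u_max neighbour_vertex[of u h] u by force
  then show False
    using step[OF _ h] u by blast
qed

lemma inscribed_if_faces_inscribed:
  assumes "2 \<le> k" "k \<le> DIM('a)"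
    and faces: "\<forall>F. F face_of P \<and> aff_dim F = int k \<longrightarrow> inscribed F"
  shows "inscribed P"
proof (cases "\<exists>v0. v0 extreme_point_of P")
  case False
  then show ?thesis
    by (simp add: inscribed_def)
next
  case True
  then obtain v0 where v0: "v0 extreme_point_of P" ..
  let ?q = "\<lambda>y. y \<bullet> y"
  have faces_at: "inscribed (tight_face J)"
    if "v extreme_point_of P" "J \<subseteq> tight v" "card J = DIM('a) - k" for v J
  proof -
    have "aff_dim (tight_face J) = int k"
      using aff_dim_tight_face that \<open>k \<le> DIM('a)\<close> by simp
    moreover have "tight_face J face_of P"
      using that tight_subset by (intro tight_face_face_of) blast
    ultimately show ?thesis
      using faces by blast
  qed
  have interp_eq: "interp v ?q = interp v0 ?q" if "v extreme_point_of P" for v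
  proof (rule vertex_induct[OF v0 _ _ that])
    fix u h assume u: "u extreme_point_of P" and "h \<in> tight u"
      and "interp (neighbour u h) ?q = interp v0 ?q"
    then show "interp u ?q = interp v0 ?q"
      using interp_neighbour[OF u _ assms(1) faces_at[OF u]] by simp
  qed simp
  obtain \<alpha> \<beta> where affine: "\<And>x. interp v0 ?q x = \<alpha> \<bullet> x + \<beta>"
    using interp_is_affine by blast
  have "v \<bullet> v = \<alpha> \<bullet> v + \<beta>" if "v extreme_point_of P" for v
    using interp_at_vertex[of v ?q] interp_eq[OF that] affine by simp
  then show ?thesis
    unfolding inscribed_iff_norm_square_affine by blast
qed

end

lemma simple_polytope_presentation:
  fixes P :: "'a::euclidean_space set"
  assumes simple: "simple_polytope P" and full: "aff_dim P = int DIM('a)"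
  obtains F a b where "simple_presentation P (F :: 'a set set) a b"
proof -
  have "polyhedron P"
    using simple polytope_imp_polyhedron unfolding simple_polytope_def by blast
  then obtain F where "finite F" and seq: "P = affine hull P \<inter> \<Inter>F"
    and "\<And>h. h \<in> F \<Longrightarrow> \<exists>a b. a \<noteq> 0 \<and> h = {x. a \<bullet> x \<le> b}"
    and psub: "\<And>F'. F' \<subset> F \<Longrightarrow> P \<subset> affine hull P \<inter> \<Inter>F'"
    by (simp add: polyhedron_Int_affine_minimal) meson
  then obtain a b where ab: "\<And>h. h \<in> F \<Longrightarrow> a h \<noteq> 0 \<and> h = {x. a h \<bullet> x \<le> b h}"
    by metis
  have "affine hull P = UNIV"
    using full aff_dim_eq_full by blast
  then have P_eq: "P = {x. \<forall>h\<in>F. a h \<bullet> x \<le> b h}"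
    using seq ab by auto
  let ?facet = "\<lambda>h. P \<inter> {x. a h \<bullet> x = b h}"
  have "card {h\<in>F. a h \<bullet> v = b h} = DIM('a)" if v: "v extreme_point_of P" for v
  proof -
    have "{C. C facet_of P \<and> v \<in> C} = ?facet ` {h\<in>F. a h \<bullet> v = b h}"
      using facet_of_polyhedron_explicit[OF \<open>finite F\<close> seq ab psub] v
      by (auto simp: extreme_point_of_def)
    moreover have "inj_on ?facet {h\<in>F. a h \<bullet> v = b h}"
      using inj_on_facet_of_polyhedron_explicit[OF \<open>finite F\<close> seq ab psub] by (rule inj_on_subset) auto
    ultimately have "card {C. C facet_of P \<and> v \<in> C} = card {h\<in>F. a h \<bullet> v = b h}"
      by (simp add: card_image)
    then show ?thesis
      using simple v full unfolding simple_polytope_def by force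
  qed
  then have "simple_presentation P F a b"
    using \<open>finite F\<close> P_eq simple unfolding simple_polytope_def by unfold_locales blast+
  then show ?thesis
    by (rule that)
qed

theorem corollary4p11:
  fixes P :: "'a::euclidean_space set" and k :: nat
  assumes "polytope P" and "aff_dim P = int DIM('a)"
    and "simple_polytope P"
    and "2 \<le> k" and "k \<le> DIM('a)"
  shows "inscribed P \<longleftrightarrow>
         (\<forall>F. F face_of P \<and> aff_dim F = int k \<longrightarrow> inscribed F)"
proof
  assume "inscribed P"
  then show "\<forall>F. F face_of P \<and> aff_dim F = int k \<longrightarrow> inscribed F"
    using inscribed_face by blast
next
  assume "\<forall>F. F face_of P \<and> aff_dim F = int k \<longrightarrow> inscribed F"
  moreover obtain F :: "'a set set" and a b where "simple_presentation P F a b"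
    using simple_polytope_presentation \<open>simple_polytope P\<close> \<open>aff_dim P = int DIM('a)\<close> .
  ultimately show "inscribed P"
    using simple_presentation.inscribed_if_faces_inscribed \<open>2 \<le> k\<close> \<open>k \<le> DIM('a)\<close> by blast
qed

end
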